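(* For every integer $n \ge 0$, $$ \iint_{T} \frac{(-\ln (xy))^n}{xy}\,dx\,dy \;=\; n! \sum_{k=0}^n \zeta\big(n-k+2,\underbrace{1,\dots,1}_{k}\big), $$ where $T$ is the (closed) triangle in $\mathbb{R}^2$ with vertices $(1,0)$, $(0,1)$, $(1,1)$, i.e. $T=\{(x,y): 0\le x\le 1,\ 0\le y\le 1,\ x+y\ge 1\}$.
   Context: For integers $s_1\ge 2$ and $s_2,\dots,s_l\ge 1$, the multiple zeta value is $$ \zeta(s_1,\dots,s_l)=\sum_{n_1>n_2>\cdots>n_l\ge 1}\frac{1}{n_1^{s_1}\cdots n_l^{s_l}}. $$ In the sum, the $k=0$ term is the Riemann zeta value $\zeta(n+2)$. *)

theory Defs
  imports "HOL-Analysis.Analysis"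
begin

definition mzv_indices :: "nat \<Rightarrow> nat list set" where
  "mzv_indices l = {ns. length ns = l \<and> sorted_wrt (>) ns \<and> (\<forall>m\<in>set ns. m \<ge> 1)}"

definition mzv :: "nat list \<Rightarrow> real" where
  "mzv s = (\<Sum>\<^sub>\<infinity> ns \<in> mzv_indices (length s).
              (\<Prod>i<length s. 1 / real (ns ! i) ^ (s ! i)))"

definition triangle_T :: "(real \<times> real) set" where
  "triangle_T = {(x, y). 0 \<le> x \<and> x \<le> 1 \<and> 0 \<le> y \<and> y \<le> 1 \<and> x + y \<ge> 1}"

end

theory Submission
  imports Defs
begin

(* Integrating out y over [1 - x, 1] leaves the integral over 0 < x < 1 of
   ((-ln x - ln(1-x))^(n+1) - (-ln x)^(n+1)) / ((n+1) x), and the binomial theorem splits it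
   into the integrals of (-ln x)^(n-k) (-ln(1-x))^(k+1) / x.  Expand
   (-ln(1-x))^(k+1) / (k+1)! = Sum_N a(N) x^N, where a(N) is the sum of 1/(n_1 ... n_(k+1))
   over N = n_1 > ... > n_(k+1) >= 1; since the integral of (-ln x)^m x^(N-1) over [0,1] is
   m! / N^(m+1), the k-th integral equals (n-k)! (k+1)! zeta(n-k+2, 1, ..., 1), and the binomial
   coefficients collapse to n!.  Everything is nonnegative, so all exchanges of sums and
   integrals follow from Tonelli and monotone convergence. *)

section \<open>Multiple zeta values as series of nested harmonic sums\<close>

(* ln_power_coeff j N is the coefficient of x^N in (-ln(1-x))^j / j!: the recursion reflects
   d/dx (-ln(1-x))^(j+1) / (j+1)! = (-ln(1-x))^j / j! * 1/(1-x). *)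
fun ln_power_coeff :: "nat \<Rightarrow> nat \<Rightarrow> real" where
  "ln_power_coeff 0 N = (if N = 0 then 1 else 0)"
| "ln_power_coeff (Suc j) N = (\<Sum>i<N. ln_power_coeff j i) / real N"

lemma ln_power_coeff_nonneg: "0 \<le> ln_power_coeff j N"
  by (induction j arbitrary: N) (auto intro!: sum_nonneg divide_nonneg_nonneg)

lemma ln_power_coeff_Suc_0 [simp]: "ln_power_coeff (Suc j) 0 = 0"
  by simp

declare ln_power_coeff.simps(2) [simp del]

definition recip_prod :: "nat list \<Rightarrow> real" where
  "recip_prod ns = (\<Prod>i<length ns. 1 / real (ns ! i))"

lemma recip_prod_Cons: "recip_prod (N # ns) = recip_prod ns / real N"
  by (simp only: recip_prod_def length_Cons prod.lessThan_Suc_shift) simp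

definition mzv_indices_below :: "nat \<Rightarrow> nat \<Rightarrow> nat list set" where
  "mzv_indices_below j N = {ns \<in> mzv_indices j. \<forall>e\<in>set ns. e < N}"

definition mzv_indices_hd :: "nat \<Rightarrow> nat \<Rightarrow> nat list set" where
  "mzv_indices_hd j N = {ns \<in> mzv_indices j. hd ns = N}"

lemma Cons_mem_mzv_indices_iff:
  "N # ns \<in> mzv_indices (Suc j) \<longleftrightarrow> ns \<in> mzv_indices j \<and> (\<forall>e\<in>set ns. e < N) \<and> 1 \<le> N"
  by (auto simp: mzv_indices_def)

lemma mzv_indices_SucE:
  assumes "ns \<in> mzv_indices (Suc j)"
  obtains N ms where "ns = N # ms"
  using assms by (cases ns) (auto simp: mzv_indices_def)

lemma mzv_indices_le_hd: "ns \<in> mzv_indices j \<Longrightarrow> e \<in> set ns \<Longrightarrow> e \<le> hd ns"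
  by (cases ns) (auto simp: mzv_indices_def)

lemma finite_mzv_indices_below: "finite (mzv_indices_below j N)"
proof (rule finite_subset)
  show "mzv_indices_below j N \<subseteq> {xs. set xs \<subseteq> {..<N} \<and> length xs = j}"
    by (auto simp: mzv_indices_below_def mzv_indices_def)
qed (simp add: finite_lists_length_eq)

lemma mzv_indices_hd_Suc:
  "mzv_indices_hd (Suc j) N = (if 1 \<le> N then (#) N ` mzv_indices_below j N else {})"
proof -
  have "ns \<in> mzv_indices_hd (Suc j) N \<longleftrightarrow> 1 \<le> N \<and> ns \<in> (#) N ` mzv_indices_below j N" for ns
  proof (cases ns)
    case (Cons M ms)
    then show ?thesis
      by (auto simp: mzv_indices_hd_def mzv_indices_below_def Cons_mem_mzv_indices_iff)
  qed (auto simp: mzv_indices_hd_def mzv_indices_def)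
  then show ?thesis
    by auto
qed

lemma finite_mzv_indices_hd_Suc: "finite (mzv_indices_hd (Suc j) N)"
  by (simp add: mzv_indices_hd_Suc finite_mzv_indices_below)

lemma sum_recip_prod_hd_Suc:
  "(\<Sum>ns\<in>mzv_indices_hd (Suc j) N. recip_prod ns) = (\<Sum>ns\<in>mzv_indices_below j N. recip_prod ns) / real N"
  by (cases "N = 0") (simp_all add: mzv_indices_hd_Suc sum.reindex recip_prod_Cons sum_divide_distrib)

lemma sum_recip_prod_below:
  "1 \<le> N \<Longrightarrow> (\<Sum>ns\<in>mzv_indices_below j N. recip_prod ns) = (\<Sum>i<N. ln_power_coeff j i)"
proof (induction j arbitrary: N)
  case 0
  have "mzv_indices_below 0 N = {[]}"
    by (auto simp: mzv_indices_below_def mzv_indices_def)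
  with 0 show ?case
    by (simp add: recip_prod_def sum.If_cases lessThan_def)
next
  case (Suc j)
  have hd_sum: "(\<Sum>ns\<in>mzv_indices_hd (Suc j) M. recip_prod ns) = ln_power_coeff (Suc j) M" for M
    using Suc.IH[of M] by (cases "M = 0") (auto simp: sum_recip_prod_hd_Suc ln_power_coeff.simps(2))
  have "(\<Sum>ns\<in>mzv_indices_below (Suc j) N. recip_prod ns)
      = (\<Sum>M<N. \<Sum>ns\<in>{ns \<in> mzv_indices_below (Suc j) N. hd ns = M}. recip_prod ns)"
    by (rule sum.group[symmetric])
       (use finite_mzv_indices_below in \<open>auto simp: mzv_indices_below_def elim!: mzv_indices_SucE\<close>)
  also have "\<dots> = (\<Sum>M<N. \<Sum>ns\<in>mzv_indices_hd (Suc j) M. recip_prod ns)"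
    by (intro sum.cong refl arg_cong2[where f = sum])
       (auto simp: mzv_indices_below_def mzv_indices_hd_def dest: mzv_indices_le_hd)
  finally show ?case
    by (simp add: hd_sum)
qed

lemma sum_recip_prod_hd:
  "(\<Sum>ns\<in>mzv_indices_hd (Suc j) N. recip_prod ns) = ln_power_coeff (Suc j) N"
  by (cases "N = 0") (simp_all add: sum_recip_prod_hd_Suc sum_recip_prod_below ln_power_coeff.simps(2))

lemma sum_inverse_sqrt_le: "(\<Sum>i=1..N. 1 / sqrt (real i)) \<le> 2 * sqrt (real N)"
proof (induction N)
  case (Suc N)
  define a b where "a = sqrt (real N)" and "b = sqrt (real (Suc N))"
  have "b > 0" and "b\<^sup>2 = a\<^sup>2 + 1"
    by (simp_all add: a_def b_def)
  moreover have "2 * a * b \<le> a\<^sup>2 + b\<^sup>2"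
    by (rule sum_squares_bound)
  ultimately have "2 * a + 1 / b \<le> 2 * b"
    by (simp add: field_simps power2_eq_square)
  with Suc.IH show ?case
    by (simp add: a_def b_def)
qed simp

lemma ln_power_coeff_le: "1 \<le> N \<Longrightarrow> ln_power_coeff j N \<le> 2 ^ j / sqrt (real N)"
proof (induction j arbitrary: N)
  case (Suc j)
  have "(\<Sum>i<N. ln_power_coeff j i) \<le> 2 ^ Suc j * sqrt (real N)"
  proof (cases j)
    case 0
    have "(\<Sum>i<N. ln_power_coeff j i) = 1"
      using 0 Suc.prems by (simp add: sum.If_cases lessThan_def)
    moreover have "1 \<le> sqrt (real N)"
      using Suc.prems by simp
    ultimately show ?thesis
      using 0 by (simp del: real_sqrt_ge_1_iff)
  next
    case (Suc j')
    have "(\<Sum>i<N. ln_power_coeff j i) = (\<Sum>i=1..<N. ln_power_coeff j i)"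
      using Suc by (intro sum.mono_neutral_right) (auto simp: Suc_le_eq)
    also have "\<dots> \<le> (\<Sum>i=1..<N. 2 ^ j * (1 / sqrt (real i)))"
      using Suc.IH by (intro sum_mono) auto
    also have "\<dots> \<le> 2 ^ j * (\<Sum>i=1..N. 1 / sqrt (real i))"
      by (simp only: sum_distrib_left[symmetric]) (intro mult_left_mono sum_mono2; auto)
    also have "\<dots> \<le> 2 ^ j * (2 * sqrt (real N))"
      by (intro mult_left_mono sum_inverse_sqrt_le) simp
    finally show ?thesis
      by simp
  qed
  then have "ln_power_coeff (Suc j) N \<le> 2 ^ Suc j * sqrt (real N) / real N"
    by (simp add: ln_power_coeff.simps(2) divide_right_mono)
  also have "\<dots> = 2 ^ Suc j / sqrt (real N)"
    using Suc.prems by (simp add: field_simps)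
  finally show ?case .
qed simp

lemma summable_ln_power_coeff_div_power:
  "summable (\<lambda>N. ln_power_coeff (Suc k) N / real N ^ Suc m)"
proof (rule summable_comparison_test')
  show "summable (\<lambda>N. 2 ^ Suc k * real N powr (- 3 / 2))"
    by (intro summable_mult) (simp add: summable_real_powr_iff)
  fix N :: nat
  assume "N \<ge> 1"
  have "ln_power_coeff (Suc k) N / real N ^ Suc m \<le> ln_power_coeff (Suc k) N / real N"
    using \<open>N \<ge> 1\<close> by (intro divide_left_mono ln_power_coeff_nonneg) (auto simp: self_le_power)
  also have "\<dots> \<le> 2 ^ Suc k / sqrt (real N) / real N"
    using \<open>N \<ge> 1\<close> by (intro divide_right_mono ln_power_coeff_le) auto
  also have "\<dots> = 2 ^ Suc k * real N powr (- 3 / 2)"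
  proof -
    have "real N powr (3 / 2) = real N * sqrt (real N)"
      using powr_add[of "real N" 1 "1 / 2"] \<open>N \<ge> 1\<close> by (simp add: powr_half_sqrt)
    then show ?thesis
      by (simp add: powr_minus_divide)
  qed
  finally show "norm (ln_power_coeff (Suc k) N / real N ^ Suc m) \<le> 2 ^ Suc k * real N powr (- 3 / 2)"
    by (simp add: ln_power_coeff_nonneg)
qed

lemma has_sum_fiberwise_nonneg:
  fixes g :: "'a \<Rightarrow> real" and h :: "'a \<Rightarrow> 'b"
  assumes nonneg: "\<And>x. x \<in> A \<Longrightarrow> 0 \<le> g x"
    and fibers: "\<And>y. (g has_sum s y) {x \<in> A. h x = y}"
    and total: "(s has_sum S) UNIV"
  shows "(g has_sum S) A"
proof -
  let ?B = "\<lambda>y. {x \<in> A. h x = y}"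
  have "(\<lambda>(y, x). g x) summable_on Sigma UNIV ?B"
    using fibers total nonneg by (intro summable_on_SigmaI) (auto dest: has_sum_imp_summable)
  then have "((\<lambda>(y, x). g x) has_sum S) (Sigma UNIV ?B)"
    using fibers total by (intro has_sum_SigmaI) auto
  moreover have "bij_betw snd (Sigma UNIV ?B) A"
    by (rule bij_betwI[where g = "\<lambda>x. (h x, x)"]) auto
  ultimately show ?thesis
    by (simp add: has_sum_reindex_bij_betw[symmetric] case_prod_unfold)
qed

lemma mzv_nonneg: "0 \<le> mzv s"
  unfolding mzv_def by (intro infsum_nonneg prod_nonneg) auto

lemma mzv_summand_eq:
  assumes "ns \<in> mzv_indices (Suc k)"
  shows "(\<Prod>i<Suc k. 1 / real (ns ! i) ^ (((m + 2) # replicate k 1) ! i))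
           = recip_prod ns / real (hd ns) ^ Suc m"
proof -
  obtain N ms where ns: "ns = N # ms"
    using assms by (rule mzv_indices_SucE)
  with assms have "length ms = k"
    by (simp add: mzv_indices_def)
  then show ?thesis
    by (simp only: ns prod.lessThan_Suc_shift recip_prod_Cons) (simp add: recip_prod_def field_simps)
qed

lemma mzv_eq_suminf:
  "mzv ((m + 2) # replicate k 1) = (\<Sum>N. ln_power_coeff (Suc k) N / real N ^ Suc m)"
proof -
  define g where "g ns = recip_prod ns / real (hd ns) ^ Suc m" for ns
  have "(g has_sum (\<Sum>N. ln_power_coeff (Suc k) N / real N ^ Suc m)) (mzv_indices (Suc k))"
  proof (rule has_sum_fiberwise_nonneg[where h = hd])
    show "0 \<le> g ns" for ns
      by (simp add: g_def recip_prod_def prod_nonneg)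
    show "(g has_sum (ln_power_coeff (Suc k) N / real N ^ Suc m)) {ns \<in> mzv_indices (Suc k). hd ns = N}"
      for N
      using finite_mzv_indices_hd_Suc[of k N]
      by (intro has_sum_finiteI)
         (simp_all add: g_def mzv_indices_hd_def sum_recip_prod_hd[symmetric] sum_divide_distrib)
    show "((\<lambda>N. ln_power_coeff (Suc k) N / real N ^ Suc m)
            has_sum (\<Sum>N. ln_power_coeff (Suc k) N / real N ^ Suc m)) UNIV"
      by (intro sums_nonneg_imp_has_sum summable_sums summable_ln_power_coeff_div_power
                divide_nonneg_nonneg ln_power_coeff_nonneg) auto
  qed
  moreover have "mzv ((m + 2) # replicate k 1) = infsum g (mzv_indices (Suc k))"
    unfolding mzv_def length_Cons length_replicate by (rule infsum_cong) (simp only: g_def mzv_summand_eq)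
  ultimately show ?thesis
    by (simp add: infsumI)
qed

section \<open>The power series of (-ln(1 - x))^j\<close>

lemma partial_sums_times_power_sums:
  fixes a :: "nat \<Rightarrow> real"
  assumes a: "\<And>i. 0 \<le> a i" "summable (\<lambda>i. a i * t ^ i)" and t: "0 \<le> t" "t < 1"
  shows "(\<lambda>P. (\<Sum>i\<le>P. a i) * t ^ P) sums ((\<Sum>i. a i * t ^ i) / (1 - t))"
proof -
  have "summable (\<lambda>i. norm (a i * t ^ i))" and "summable (\<lambda>i. norm (t ^ i))"
    using a t by (simp_all add: summable_geometric)
  then have "(\<lambda>P. \<Sum>i\<le>P. a i * t ^ i * t ^ (P - i)) sums ((\<Sum>i. a i * t ^ i) * (\<Sum>i. t ^ i))"
    by (rule Cauchy_product_sums)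
  moreover have "(\<Sum>i\<le>P. a i * t ^ i * t ^ (P - i)) = (\<Sum>i\<le>P. a i) * t ^ P" for P
    unfolding sum_distrib_right by (intro sum.cong refl) (simp add: mult.assoc flip: power_add)
  ultimately show ?thesis
    using t by (simp add: suminf_geometric divide_inverse)
qed

lemma has_real_derivative_neg_ln_one_minus_power:
  assumes "t < 1"
  shows "((\<lambda>t. (- ln (1 - t)) ^ Suc j / fact (Suc j))
           has_real_derivative (- ln (1 - t)) ^ j / fact j / (1 - t)) (at t)"
proof -
  have "((\<lambda>t. - ln (1 - t)) has_real_derivative 1 / (1 - t)) (at t)"
    using assms by (auto intro!: derivative_eq_intros)
  from DERIV_power[OF this, of "Suc j"]
  have "((\<lambda>t. (- ln (1 - t)) ^ Suc j / fact (Suc j))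
          has_real_derivative real (Suc j) * (1 / (1 - t) * (- ln (1 - t)) ^ j) / fact (Suc j)) (at t)"
    by (intro DERIV_cdivide) simp
  then show ?thesis
    by (rule DERIV_cong)
       (use assms in \<open>simp only: fact_Suc of_nat_mult, simp add: field_simps del: of_nat_Suc\<close>)
qed

lemma nn_integral_power_atLeastAtMost:
  assumes "0 \<le> x"
  shows "(\<integral>\<^sup>+t. ennreal (t ^ P) * indicator {0..x} t \<partial>lborel) = ennreal (x ^ Suc P / real (Suc P))"
proof -
  have "((\<lambda>t. t ^ Suc P / real (Suc P)) has_real_derivative t ^ P) (at t)" for t
    using DERIV_cdivide[OF DERIV_pow[of "Suc P" t], of "real (Suc P)"] by simp
  then have "(\<integral>\<^sup>+t. ennreal (t ^ P) * indicator {0..x} t \<partial>lborel)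
          = ennreal (x ^ Suc P / real (Suc P) - 0 ^ Suc P / real (Suc P))"
    using assms by (intro nn_integral_FTC_Icc) auto
  then show ?thesis
    by simp
qed

lemma nn_integral_neg_ln_one_minus_power_div:
  assumes "0 \<le> x" "x < 1"
  shows "(\<integral>\<^sup>+t. ennreal ((- ln (1 - t)) ^ j / fact j / (1 - t)) * indicator {0..x} t \<partial>lborel)
           = ennreal ((- ln (1 - x)) ^ Suc j / fact (Suc j))"
proof -
  have "(\<integral>\<^sup>+t. ennreal ((- ln (1 - t)) ^ j / fact j / (1 - t)) * indicator {0..x} t \<partial>lborel)
          = ennreal ((- ln (1 - x)) ^ Suc j / fact (Suc j) - (- ln (1 - 0)) ^ Suc j / fact (Suc j))"
    using assms
    by (intro nn_integral_FTC_Icc has_real_derivative_neg_ln_one_minus_power) auto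
  then show ?thesis
    by simp
qed

lemma sums_if_suminf_ennreal_eq:
  fixes f :: "nat \<Rightarrow> real"
  assumes "\<And>i. 0 \<le> f i" "0 \<le> s" "(\<Sum>i. ennreal (f i)) = ennreal s"
  shows "f sums s"
proof -
  have "(\<lambda>i. ennreal (f i)) sums ennreal s"
    by (metis assms(3) summableI summable_sums)
  with assms(1,2) show ?thesis
    by simp
qed

lemma neg_ln_one_minus_power_sums:
  "0 \<le> x \<Longrightarrow> x < 1 \<Longrightarrow> (\<lambda>N. ln_power_coeff j N * x ^ N) sums ((- ln (1 - x)) ^ j / fact j)"
proof (induction j arbitrary: x)
  case 0
  have "(\<lambda>N. ln_power_coeff 0 N * x ^ N) = (\<lambda>N. if N = 0 then 1 else 0)"
    by auto
  then show ?case
    using sums_single[of 0 "\<lambda>_. 1 :: real"] by simp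
next
  case (Suc j)
  define A where "A P = (\<Sum>i\<le>P. ln_power_coeff j i)" for P
  have A_nonneg: "0 \<le> A P" for P
    by (simp add: A_def sum_nonneg ln_power_coeff_nonneg)
  have A_sums: "(\<lambda>P. A P * t ^ P) sums ((- ln (1 - t)) ^ j / fact j / (1 - t))" if "0 \<le> t" "t < 1" for t
    using partial_sums_times_power_sums[OF ln_power_coeff_nonneg sums_summable[OF Suc.IH] that]
          sums_unique[OF Suc.IH] that
    by (simp add: A_def)
  have "ennreal ((- ln (1 - x)) ^ Suc j / fact (Suc j))
          = (\<integral>\<^sup>+t. ennreal ((- ln (1 - t)) ^ j / fact j / (1 - t)) * indicator {0..x} t \<partial>lborel)"
    by (rule nn_integral_neg_ln_one_minus_power_div[OF Suc.prems, symmetric])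
  also have "\<dots> = (\<integral>\<^sup>+t. (\<Sum>P. ennreal (A P) * (ennreal (t ^ P) * indicator {0..x} t)) \<partial>lborel)"
    using suminf_ennreal_eq[OF _ A_sums] A_nonneg Suc.prems
    by (intro nn_integral_cong) (simp add: ennreal_mult split: split_indicator)
  also have "\<dots> = (\<Sum>P. ennreal (A P) * ennreal (x ^ Suc P / real (Suc P)))"
    using Suc.prems
    by (simp add: nn_integral_suminf nn_integral_cmult nn_integral_power_atLeastAtMost)
  also have "\<dots> = (\<Sum>P. ennreal (ln_power_coeff (Suc j) (Suc P) * x ^ Suc P))"
    using Suc.prems A_nonneg
    by (simp add: A_def ln_power_coeff.simps(2) lessThan_Suc_atMost ennreal_mult'[symmetric])
  finally have series: "(\<Sum>P. ennreal (ln_power_coeff (Suc j) (Suc P) * x ^ Suc P))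
                          = ennreal ((- ln (1 - x)) ^ Suc j / fact (Suc j))"
    by (rule sym)
  have "0 \<le> (- ln (1 - x)) ^ Suc j / fact (Suc j)"
    using Suc.prems by (intro divide_nonneg_nonneg zero_le_power) auto
  from sums_if_suminf_ennreal_eq[OF _ this series]
  have "(\<lambda>P. ln_power_coeff (Suc j) (Suc P) * x ^ Suc P) sums ((- ln (1 - x)) ^ Suc j / fact (Suc j))"
    using Suc.prems by (simp add: ln_power_coeff_nonneg)
  then show ?case
    using sums_Suc_iff[of "\<lambda>N. ln_power_coeff (Suc j) N * x ^ N"] by simp
qed

section \<open>Logarithmic integrals over the unit interval\<close>

lemma nn_integral_FTC_greaterThanAtMost:
  fixes f F :: "real \<Rightarrow> real"
  assumes "a < b" and [measurable]: "f \<in> borel_measurable borel"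
    and deriv: "\<And>x. a < x \<Longrightarrow> x \<le> b \<Longrightarrow> (F has_real_derivative f x) (at x)"
    and nonneg: "\<And>x. a < x \<Longrightarrow> x \<le> b \<Longrightarrow> 0 \<le> f x"
    and lim: "(F \<longlongrightarrow> L) (at_right a)"
  shows "(\<integral>\<^sup>+x. ennreal (f x) * indicator {a<..b} x \<partial>lborel) = ennreal (F b - L)"
proof -
  define e where "e k = a + (b - a) / real (Suc k)" for k
  have e_gt: "a < e k" for k
    using \<open>a < b\<close> by (simp add: e_def)
  have e_le: "e k \<le> b" for k
    using \<open>a < b\<close> by (simp add: e_def field_simps mult_right_mono)
  have e_mono: "e (Suc k) \<le> e k" for k
    using \<open>a < b\<close> by (auto simp: e_def intro!: divide_left_mono)
  have "e \<longlonglongrightarrow> a + (b - a) * 0"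
    unfolding e_def divide_inverse by (intro tendsto_intros LIMSEQ_inverse_real_of_nat)
  then have e_lim: "filterlim e (at_right a) sequentially"
    using e_gt by (intro tendsto_imp_filterlim_at_right) auto
  have "(\<lambda>k. \<integral>\<^sup>+x. ennreal (f x) * indicator {e k..b} x \<partial>lborel)
          \<longlonglongrightarrow> (\<integral>\<^sup>+x. ennreal (f x) * indicator {a<..b} x \<partial>lborel)"
  proof (rule nn_integral_LIMSEQ)
    show "incseq (\<lambda>k x. ennreal (f x) * indicator {e k..b} x)"
      using e_mono by (intro incseq_SucI le_funI) (fastforce split: split_indicator intro: order_trans)
    show "(\<lambda>k. ennreal (f x) * indicator {e k..b} x) \<longlonglongrightarrow> ennreal (f x) * indicator {a<..b} x"
      for x
    proof (cases "a < x")
      case True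
      have "eventually (\<lambda>k. e k < x) sequentially"
        using e_lim True by (simp add: filterlim_at_right_to_0 order_tendsto_iff filterlim_at)
      then have "eventually (\<lambda>k. ennreal (f x) * indicator {e k..b} x
                    = ennreal (f x) * indicator {a<..b} x) sequentially"
        by eventually_elim (use True in \<open>auto split: split_indicator\<close>)
      then show ?thesis
        by (rule tendsto_eventually)
    next
      case False
      then have "ennreal (f x) * indicator {e k..b} x = 0" for k
        using e_gt[of k] by (simp split: split_indicator)
      with False show ?thesis
        by (simp del: mult_eq_0_iff)
    qed
  qed simp
  moreover have "(\<lambda>k. ennreal (F b - F (e k))) \<longlonglongrightarrow> ennreal (F b - L)"
    by (intro tendsto_ennrealI tendsto_diff tendsto_const filterlim_compose[OF lim e_lim])
  moreover have "(\<integral>\<^sup>+x. ennreal (f x) * indicator {e k..b} x \<partial>lborel) = ennreal (F b - F (e k))" for k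
    using e_gt[of k] e_le[of k] by (intro nn_integral_FTC_Icc deriv nonneg) auto
  ultimately show ?thesis
    using LIMSEQ_unique by simp
qed

lemma tendsto_neg_ln_power_mult_power_at_right_0:
  "((\<lambda>x::real. (- ln x) ^ m * x ^ Suc N) \<longlongrightarrow> 0) (at_right 0)"
proof -
  have "filterlim (\<lambda>x::real. - ln x) at_top (at_right 0)"
    by (rule filterlim_compose[OF filterlim_uminus_at_top_at_bot ln_at_0])
  then have "((\<lambda>x::real. (- ln x) ^ m / exp (- ln x)) \<longlongrightarrow> 0) (at_right 0)"
    by (rule filterlim_compose[OF tendsto_power_div_exp_0])
  moreover have "eventually (\<lambda>x::real. (- ln x) ^ m / exp (- ln x) = (- ln x) ^ m * x) (at_right 0)"
    using eventually_at_right_less[of "0::real"] by eventually_elim (simp add: exp_minus divide_inverse)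
  ultimately have "((\<lambda>x::real. (- ln x) ^ m * x) \<longlongrightarrow> 0) (at_right 0)"
    by (rule Lim_transform_eventually[OF _ eventually_mono]) simp
  then have "((\<lambda>x::real. (- ln x) ^ m * x * x ^ N) \<longlongrightarrow> 0 * 0 ^ N) (at_right 0)"
    by (intro tendsto_intros)
  then show ?thesis
    by (simp add: mult.assoc)
qed

(* Repeated integration by parts. *)
fun ln_power_antideriv :: "nat \<Rightarrow> nat \<Rightarrow> real \<Rightarrow> real" where
  "ln_power_antideriv N 0 x = x ^ Suc N / real (Suc N)"
| "ln_power_antideriv N (Suc m) x =
     (- ln x) ^ Suc m * x ^ Suc N / real (Suc N) + real (Suc m) / real (Suc N) * ln_power_antideriv N m x"

lemma ln_power_antideriv_has_real_derivative:
  "0 < x \<Longrightarrow> (ln_power_antideriv N m has_real_derivative (- ln x) ^ m * x ^ N) (at x)"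
proof (induction m)
  case 0
  show ?case
    using DERIV_cdivide[OF DERIV_pow[of "Suc N" x], of "real (Suc N)"]
    by (simp add: ln_power_antideriv.simps(1)[abs_def])
next
  case (Suc m)
  have "((\<lambda>x. - ln x) has_real_derivative - (1 / x)) (at x)"
    using Suc.prems by (auto intro!: derivative_eq_intros)
  from DERIV_power[OF this, of "Suc m"]
  have ln_power: "((\<lambda>x. (- ln x) ^ Suc m) has_real_derivative real (Suc m) * (- (1 / x) * (- ln x) ^ m)) (at x)"
    by simp
  have power: "((\<lambda>x. x ^ Suc N) has_real_derivative real (Suc N) * x ^ N) (at x)"
    using DERIV_pow[of "Suc N" x] by simp
  have "(ln_power_antideriv N (Suc m) has_real_derivative
          (real (Suc m) * (- (1 / x) * (- ln x) ^ m) * x ^ Suc N + real (Suc N) * x ^ N * (- ln x) ^ Suc m)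
            / real (Suc N) + real (Suc m) / real (Suc N) * ((- ln x) ^ m * x ^ N)) (at x)"
    unfolding ln_power_antideriv.simps(2)[abs_def]
    by (intro DERIV_add DERIV_cdivide DERIV_cmult DERIV_mult ln_power power Suc.IH Suc.prems)
  then show ?case
    by (rule DERIV_cong) (use Suc.prems in \<open>simp add: field_simps del: of_nat_Suc\<close>)
qed

lemma ln_power_antideriv_1: "ln_power_antideriv N m 1 = fact m / real (Suc N) ^ Suc m"
  by (induction m) simp_all

lemma ln_power_antideriv_tendsto_0: "(ln_power_antideriv N m \<longlongrightarrow> 0) (at_right 0)"
proof (induction m)
  case 0
  have "((\<lambda>x::real. x ^ Suc N / real (Suc N)) \<longlongrightarrow> 0 ^ Suc N / real (Suc N)) (at_right 0)"
    by (intro tendsto_intros) (simp del: of_nat_Suc)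
  then show ?case
    by (simp add: ln_power_antideriv.simps(1)[abs_def])
next
  case (Suc m)
  have "((\<lambda>x. (- ln x) ^ Suc m * x ^ Suc N / real (Suc N) + real (Suc m) / real (Suc N) * ln_power_antideriv N m x)
          \<longlongrightarrow> 0 / real (Suc N) + real (Suc m) / real (Suc N) * 0) (at_right 0)"
    by (intro tendsto_intros tendsto_neg_ln_power_mult_power_at_right_0 Suc.IH) (simp del: of_nat_Suc)
  then show ?case
    by (simp add: ln_power_antideriv.simps(2)[abs_def])
qed

lemma nn_integral_neg_ln_power_mult_power:
  "(\<integral>\<^sup>+x. ennreal ((- ln x) ^ m * x ^ N) * indicator {0<..<1} x \<partial>lborel)
     = ennreal (fact m / real (Suc N) ^ Suc m)"
proof -
  have "(\<integral>\<^sup>+x. ennreal ((- ln x) ^ m * x ^ N) * indicator {0<..<1} x \<partial>lborel)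
          = (\<integral>\<^sup>+x. ennreal ((- ln x) ^ m * x ^ N) * indicator {0<..1} x \<partial>lborel)"
    by (intro nn_integral_cong_AE, use AE_lborel_singleton[of "1::real"] in eventually_elim)
       (auto split: split_indicator)
  also have "\<dots> = ennreal (ln_power_antideriv N m 1 - 0)"
    by (rule nn_integral_FTC_greaterThanAtMost)
       (auto intro: ln_power_antideriv_has_real_derivative ln_power_antideriv_tendsto_0)
  finally show ?thesis
    by (simp add: ln_power_antideriv_1)
qed

lemma neg_ln_power_mult_neg_ln_one_minus_power_sums:
  assumes "0 < x" "x < 1"
  shows "(\<lambda>N. fact (Suc k) * ln_power_coeff (Suc k) (Suc N) * ((- ln x) ^ m * x ^ N))
           sums ((- ln x) ^ m * (- ln (1 - x)) ^ Suc k / x)"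
proof -
  have "(\<lambda>N. ln_power_coeff (Suc k) (Suc N) * x ^ Suc N) sums ((- ln (1 - x)) ^ Suc k / fact (Suc k))"
    using neg_ln_one_minus_power_sums[of x "Suc k"] assms
          sums_Suc_iff[of "\<lambda>N. ln_power_coeff (Suc k) N * x ^ N"]
    by simp
  then have "(\<lambda>N. fact (Suc k) * (- ln x) ^ m / x * (ln_power_coeff (Suc k) (Suc N) * x ^ Suc N))
               sums (fact (Suc k) * (- ln x) ^ m / x * ((- ln (1 - x)) ^ Suc k / fact (Suc k)))"
    by (rule sums_mult)
  then show ?thesis
    using assms by (simp add: field_simps del: fact_Suc)
qed

lemma nn_integral_neg_ln_power_mult_neg_ln_one_minus_power:
  "(\<integral>\<^sup>+x. ennreal ((- ln x) ^ m * (- ln (1 - x)) ^ Suc k / x) * indicator {0<..<1} x \<partial>lborel)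
     = ennreal (fact m * fact (Suc k) * mzv ((m + 2) # replicate k 1))"
proof -
  define C where "C N = fact (Suc k) * ln_power_coeff (Suc k) (Suc N)" for N
  define h where "h N = ln_power_coeff (Suc k) N / real N ^ Suc m" for N
  have C_nonneg: "0 \<le> C N" for N
    by (simp add: C_def ln_power_coeff_nonneg)
  have h_nonneg: "0 \<le> h N" for N
    by (simp add: h_def ln_power_coeff_nonneg)
  have h_summable: "summable h"
    unfolding h_def by (rule summable_ln_power_coeff_div_power)
  have "(\<integral>\<^sup>+x. ennreal ((- ln x) ^ m * (- ln (1 - x)) ^ Suc k / x) * indicator {0<..<1} x \<partial>lborel)
      = (\<integral>\<^sup>+x. (\<Sum>N. ennreal (C N) * (ennreal ((- ln x) ^ m * x ^ N) * indicator {0<..<1} x)) \<partial>lborel)"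
  proof (intro nn_integral_cong)
    fix x :: real
    have "ennreal ((- ln x) ^ m * (- ln (1 - x)) ^ Suc k / x)
            = (\<Sum>N. ennreal (C N) * ennreal ((- ln x) ^ m * x ^ N))" if "0 < x" "x < 1"
      using suminf_ennreal_eq[OF _ neg_ln_power_mult_neg_ln_one_minus_power_sums[OF that]] C_nonneg that
      by (simp add: C_def ennreal_mult ln_power_coeff_nonneg)
    then show "ennreal ((- ln x) ^ m * (- ln (1 - x)) ^ Suc k / x) * indicator {0<..<1} x
                 = (\<Sum>N. ennreal (C N) * (ennreal ((- ln x) ^ m * x ^ N) * indicator {0<..<1} x))"
      by (simp split: split_indicator)
  qed
  also have "\<dots> = (\<Sum>N. ennreal (C N) * ennreal (fact m / real (Suc N) ^ Suc m))"
    by (simp add: nn_integral_suminf nn_integral_cmult nn_integral_neg_ln_power_mult_power)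
  also have "\<dots> = (\<Sum>N. ennreal (fact m * fact (Suc k) * h (Suc N)))"
    using C_nonneg by (simp add: C_def h_def ennreal_mult[symmetric] ac_simps del: fact_Suc of_nat_Suc)
  also have "\<dots> = ennreal (fact m * fact (Suc k) * (\<Sum>N. h (Suc N)))"
    using h_summable h_nonneg
    by (intro suminf_ennreal_eq sums_mult summable_sums) (simp_all add: summable_Suc_iff del: fact_Suc)
  also have "(\<Sum>N. h (Suc N)) = suminf h"
    using suminf_split_head[OF h_summable] by (simp add: h_def)
  also have "\<dots> = mzv ((m + 2) # replicate k 1)"
    by (simp only: mzv_eq_suminf h_def[abs_def])
  finally show ?thesis .
qed

section \<open>The integral over the triangle\<close>

definition triangle_slice :: "nat \<Rightarrow> real \<Rightarrow> real" where
  "triangle_slice n x = ((- ln x - ln (1 - x)) ^ Suc n - (- ln x) ^ Suc n) / (real (Suc n) * x)"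

lemma has_integral_triangle_slice:
  assumes "0 < x" "x < 1"
  shows "((\<lambda>y. (- ln x - ln y) ^ n / (x * y)) has_integral triangle_slice n x) {1 - x..1}"
proof -
  define G where "G y = - ((- ln x - ln y) ^ Suc n / (real (Suc n) * x))" for y
  have "(G has_real_derivative (- ln x - ln y) ^ n / (x * y)) (at y)" if "0 < y" for y
  proof -
    have "((\<lambda>y. - ln x - ln y) has_real_derivative - (1 / y)) (at y)"
      using that by (auto intro!: derivative_eq_intros)
    from DERIV_power[OF this, of "Suc n"]
    have "(G has_real_derivative - (real (Suc n) * (- (1 / y) * (- ln x - ln y) ^ n) / (real (Suc n) * x))) (at y)"
      unfolding G_def by (intro DERIV_cdivide DERIV_minus) simp
    then show ?thesis
      by (rule DERIV_cong) (use assms that in \<open>simp add: field_simps del: of_nat_Suc\<close>)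
  qed
  then have "((\<lambda>y. (- ln x - ln y) ^ n / (x * y)) has_integral G 1 - G (1 - x)) {1 - x..1}"
    using assms
    by (intro fundamental_theorem_of_calculus)
       (auto simp: has_real_derivative_iff_has_vector_derivative[symmetric] intro: has_field_derivative_at_within)
  moreover have "G 1 - G (1 - x) = triangle_slice n x"
    by (simp add: G_def triangle_slice_def diff_divide_distrib add_divide_distrib)
  ultimately show ?thesis
    by simp
qed

lemma triangle_slice_eq_sum:
  assumes "0 < x" "x < 1"
  shows "triangle_slice n x = (\<Sum>k\<le>n. fact n / (fact (n - k) * fact (Suc k))
                                    * ((- ln x) ^ (n - k) * (- ln (1 - x)) ^ Suc k / x))"
proof -
  define c L where "c = - ln x" and "L = - ln (1 - x)"
  have "(c + L) ^ Suc n = (\<Sum>j\<le>Suc n. real (Suc n choose j) * L ^ j * c ^ (Suc n - j))"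
    by (subst add.commute) (rule binomial_ring)
  also have "\<dots> = c ^ Suc n + (\<Sum>k\<le>n. real (Suc n choose Suc k) * L ^ Suc k * c ^ (n - k))"
    by (simp only: sum.atMost_Suc_shift) simp
  finally have "triangle_slice n x = (\<Sum>k\<le>n. real (Suc n choose Suc k) / real (Suc n) * (c ^ (n - k) * L ^ Suc k / x))"
    by (simp add: triangle_slice_def c_def L_def sum_divide_distrib ac_simps del: binomial_Suc_Suc)
  also have "\<dots> = (\<Sum>k\<le>n. fact n / (fact (n - k) * fact (Suc k)) * (c ^ (n - k) * L ^ Suc k / x))"
  proof (intro sum.cong refl arg_cong2[where f = "(*)"])
    fix k assume "k \<in> {..n}"
    then show "real (Suc n choose Suc k) / real (Suc n) = fact n / (fact (n - k) * fact (Suc k))"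
      by (simp add: binomial_fact fact_Suc[of n] field_simps del: fact_Suc binomial_Suc_Suc of_nat_Suc)
  qed
  finally show ?thesis
    by (simp add: c_def L_def)
qed

lemma nn_integral_triangle_slice:
  "(\<integral>\<^sup>+x. ennreal (triangle_slice n x) * indicator {0<..<1} x \<partial>lborel)
     = ennreal (fact n * (\<Sum>k = 0..n. mzv ((n - k + 2) # replicate k 1)))"
proof -
  define c :: "nat \<Rightarrow> real" where "c k = fact n / (fact (n - k) * fact (Suc k))" for k
  define T :: "nat \<Rightarrow> real \<Rightarrow> real"
    where "T k x = (- ln x) ^ (n - k) * (- ln (1 - x)) ^ Suc k / x" for k x
  have c_nonneg: "0 \<le> c k" for k
    by (simp add: c_def)
  have "(\<integral>\<^sup>+x. ennreal (triangle_slice n x) * indicator {0<..<1} x \<partial>lborel)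
      = (\<integral>\<^sup>+x. (\<Sum>k\<le>n. ennreal (c k) * (ennreal (T k x) * indicator {0<..<1} x)) \<partial>lborel)"
  proof (intro nn_integral_cong)
    fix x :: real
    have "ennreal (triangle_slice n x) = (\<Sum>k\<le>n. ennreal (c k) * ennreal (T k x))" if "0 < x" "x < 1"
    proof -
      have "0 \<le> T k x" for k
        unfolding T_def using that by (intro divide_nonneg_nonneg mult_nonneg_nonneg zero_le_power) auto
      then have "0 \<le> c k * T k x" for k
        using c_nonneg by (rule mult_nonneg_nonneg[rotated])
      moreover have "triangle_slice n x = (\<Sum>k\<le>n. c k * T k x)"
        using that by (simp only: triangle_slice_eq_sum c_def T_def)
      ultimately show ?thesis
        using c_nonneg by (simp add: ennreal_mult'[symmetric] sum_ennreal)
    qed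
    then show "ennreal (triangle_slice n x) * indicator {0<..<1} x
                 = (\<Sum>k\<le>n. ennreal (c k) * (ennreal (T k x) * indicator {0<..<1} x))"
      by (simp split: split_indicator)
  qed
  also have "\<dots> = (\<Sum>k\<le>n. ennreal (c k) * ennreal (fact (n - k) * fact (Suc k) * mzv ((n - k + 2) # replicate k 1)))"
    using nn_integral_neg_ln_power_mult_neg_ln_one_minus_power[of "n - _" "_"]
    by (simp add: nn_integral_sum nn_integral_cmult T_def)
  also have "\<dots> = (\<Sum>k\<le>n. ennreal (fact n * mzv ((n - k + 2) # replicate k 1)))"
  proof (intro sum.cong refl)
    fix k
    have "c k * (fact (n - k) * fact (Suc k) * z) = fact n * z" for z
      by (simp add: c_def field_simps del: fact_Suc)
    then show "ennreal (c k) * ennreal (fact (n - k) * fact (Suc k) * mzv ((n - k + 2) # replicate k 1))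
                 = ennreal (fact n * mzv ((n - k + 2) # replicate k 1))"
      using c_nonneg by (simp only: ennreal_mult'[symmetric])
  qed
  also have "\<dots> = ennreal (fact n * (\<Sum>k = 0..n. mzv ((n - k + 2) # replicate k 1)))"
    by (simp add: sum_ennreal mzv_nonneg sum_distrib_left atLeast0AtMost)
  finally show ?thesis .
qed

definition log_kernel :: "nat \<Rightarrow> real \<times> real \<Rightarrow> real" where
  "log_kernel n = (\<lambda>(x, y). (- ln (x * y)) ^ n / (x * y))"

lemma sets_triangle_T [measurable]: "triangle_T \<in> sets borel"
proof -
  have "triangle_T = {p. 0 \<le> fst p} \<inter> {p. fst p \<le> 1} \<inter> {p. 0 \<le> snd p} \<inter> {p. snd p \<le> 1}
                      \<inter> {p. 1 \<le> fst p + snd p}"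
    by (auto simp: triangle_T_def)
  also have "\<dots> \<in> sets borel"
    by (intro borel_closed closed_Int closed_Collect_le continuous_intros)
  finally show ?thesis .
qed

lemma borel_measurable_log_kernel [measurable]: "log_kernel n \<in> borel_measurable borel"
proof -
  have [measurable]: "(\<lambda>p::real \<times> real. fst p * snd p) \<in> borel_measurable borel"
    by (intro borel_measurable_continuous_onI continuous_intros)
  show ?thesis
    unfolding log_kernel_def case_prod_beta by measurable
qed

(* On the axes the kernel is 0, since ln 0 = 0 and division by 0 yields 0. *)
lemma log_kernel_nonneg:
  assumes "p \<in> triangle_T"
  shows "0 \<le> log_kernel n p"
proof -
  obtain x y where p: "p = (x, y)" and "0 \<le> x" "x \<le> 1" "0 \<le> y" "y \<le> 1"
    using assms by (auto simp: triangle_T_def)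
  then have "0 \<le> x * y" and "x * y \<le> 1"
    by (simp_all add: mult_le_one)
  moreover have "ln (x * y) \<le> 0"
  proof (cases "0 < x * y")
    case False
    with \<open>0 \<le> x * y\<close> have "x * y = 0"
      by simp
    then show ?thesis
      by (simp only: ln_0 order_refl)
  qed (use \<open>x * y \<le> 1\<close> in simp)
  ultimately show ?thesis
    by (simp add: log_kernel_def p)
qed

(* At x = 1 the inner integral diverges; that line is a null set. *)
lemma nn_integral_triangle_T_slice:
  assumes "x \<noteq> 1"
  shows "(\<integral>\<^sup>+y. ennreal (indicator triangle_T (x, y) * log_kernel n (x, y)) \<partial>lborel)
           = ennreal (triangle_slice n x) * indicator {0<..<1} x"
proof (cases "0 < x \<and> x < 1")
  case True
  define g where "g y = (- ln x - ln y) ^ n / (x * y)" for y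
  have "(\<integral>\<^sup>+y. ennreal (indicator triangle_T (x, y) * log_kernel n (x, y)) \<partial>lborel)
          = (\<integral>\<^sup>+y. ennreal (indicator {1 - x..1} y * g y) \<partial>lborel)"
    using True by (intro nn_integral_cong)
                  (auto simp: triangle_T_def log_kernel_def g_def ln_mult split: split_indicator)
  also have "\<dots> = ennreal (triangle_slice n x)"
  proof (rule nn_integral_has_integral_lebesgue)
    show "0 \<le> g y" if "y \<in> {1 - x..1}" for y
    proof -
      have "0 < y" "y \<le> 1"
        using that True by auto
      then have "ln y \<le> 0" "ln x \<le> 0"
        using True by simp_all
      then have "0 \<le> - ln x - ln y"
        by linarith
      then show ?thesis
        unfolding g_def by (intro divide_nonneg_nonneg zero_le_power) (use True \<open>0 < y\<close> in auto)
    qed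
    show "(g has_integral triangle_slice n x) {1 - x..1}"
      unfolding g_def using True by (intro has_integral_triangle_slice) auto
  qed
  finally show ?thesis
    using True by simp
next
  case False
  with assms have vanish: "indicator triangle_T (x, y) * log_kernel n (x, y) = 0" for y
    by (auto simp: triangle_T_def log_kernel_def)
  from False show ?thesis
    by (simp only: vanish) simp
qed

lemma nn_integral_triangle_T_log_kernel:
  "(\<integral>\<^sup>+p. ennreal (indicator triangle_T p * log_kernel n p) \<partial>lborel)
     = ennreal (fact n * (\<Sum>k = 0..n. mzv ((n - k + 2) # replicate k 1)))"
proof -
  have "(\<integral>\<^sup>+p. ennreal (indicator triangle_T p * log_kernel n p) \<partial>lborel)
          = (\<integral>\<^sup>+x. \<integral>\<^sup>+y. ennreal (indicator triangle_T (x, y) * log_kernel n (x, y)) \<partial>lborel \<partial>lborel)"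
  proof -
    have "(\<lambda>p. ennreal (indicator triangle_T p * log_kernel n p)) \<in> borel_measurable (lborel \<Otimes>\<^sub>M lborel)"
      by (simp only: lborel_prod) measurable
    from lborel.nn_integral_fst[OF this] show ?thesis
      by (simp only: lborel_prod)
  qed
  also have "\<dots> = (\<integral>\<^sup>+x. ennreal (triangle_slice n x) * indicator {0<..<1} x \<partial>lborel)"
    by (intro nn_integral_cong_AE, use AE_lborel_singleton[of "1::real"] in eventually_elim)
       (simp add: nn_integral_triangle_T_slice)
  finally show ?thesis
    by (simp only: nn_integral_triangle_slice)
qed

theorem theorem1:
  fixes n :: nat
  defines "f \<equiv> (\<lambda>(x::real, y::real). (- ln (x * y)) ^ n / (x * y))"
  shows "set_integrable lborel triangle_T f \<and>
         (\<integral>p\<in>triangle_T. f p \<partial>lborel) =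
           fact n * (\<Sum>k = 0..n. mzv ((n - k + 2) # replicate k 1))"
proof -
  have "f = log_kernel n"
    by (simp add: f_def log_kernel_def)
  moreover have "0 \<le> fact n * (\<Sum>k = 0..n. mzv ((n - k + 2) # replicate k 1))"
    by (simp add: sum_nonneg mzv_nonneg)
  ultimately have "integrable lborel (\<lambda>p. indicator triangle_T p * f p)
                   \<and> (\<integral>p. indicator triangle_T p * f p \<partial>lborel)
                       = fact n * (\<Sum>k = 0..n. mzv ((n - k + 2) # replicate k 1))"
    using nn_integral_triangle_T_log_kernel[of n] log_kernel_nonneg
    by (subst nn_integral_eq_integrable[symmetric]) (auto split: split_indicator)
  then show ?thesis
    by (simp add: set_integrable_def set_lebesgue_integral_def)
qed

end
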